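(* Let $p$ be a prime such that $2$ is a generator of the multiplicative group $(\mathbb{Z}/p\mathbb{Z})^*$, and let $F_{mt}:\mathbb{F}_p^2\to\mathbb{F}_p^2$ be the map $F_{mt}(x,y)=(x^2y(x-y),\;2xy^2(x-y))$, where $\mathbb{F}_p=\mathbb{Z}/p\mathbb{Z}$. Then there exists $N\ge 1$ such that the $N$-th iterate $F_{mt}^{\circ N}$ sends every point of $\mathbb{F}_p^2$ to $(0,0)$.
   Context: $F_{mt}$ is the reduction modulo $p$ of the integer polynomial map $(x,y)\mapsto(x^2y(x-y),\,2xy^2(x-y))$ (called the "multiplicative trap"); $F_{mt}^{\circ N}$ denotes its $N$-fold composition with itself. *)

theory Defs
  imports "HOL-Number_Theory.Number_Theory"
begin

text \<open>The "multiplicative trap" map on F_p^2, with F_p represented by the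
residues {0..<p} of int and every coordinate reduced modulo p.\<close>
definition F_mt :: "int \<Rightarrow> int \<times> int \<Rightarrow> int \<times> int" where
  "F_mt p = (\<lambda>(x, y). ((x^2 * y * (x - y)) mod p, (2 * x * y^2 * (x - y)) mod p))"

end

theory Submission
  imports Defs "HOL-Number_Theory.Residue_Primitive_Roots"
begin

text \<open>Writing \<open>F_mt (x, y) = (x \<cdot> x y (x - y), 2 y \<cdot> x y (x - y))\<close> shows that \<open>F_mt\<close> divides the
  ratio \<open>x / y\<close> by 2. If 2 generates \<open>\<bbbF>\<^sub>p\<^sup>*\<close>, the ratio of a point off the axes is \<open>2\<^sup>k\<close> with
  \<open>k < p - 1\<close>; after \<open>k\<close> steps the point lies on the diagonal, and the diagonal and the axes are
  mapped to the fixed point \<open>(0, 0)\<close>.\<close>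

lemma F_mt_axes: "x = 0 \<or> y = 0 \<Longrightarrow> F_mt p (x, y) = (0, 0)"
  by (auto simp: F_mt_def)

lemma F_mt_diagonal: "F_mt p (x, x) = (0, 0)"
  by (simp add: F_mt_def)

lemma funpow_F_mt_zero: "(F_mt p ^^ n) (0, 0) = (0, 0)"
  by (induction n) (simp_all add: F_mt_axes)

lemma funpow_F_mt_zero_mono:
  assumes "(F_mt p ^^ n) z = (0, 0)" and "n \<le> m"
  shows "(F_mt p ^^ m) z = (0, 0)"
proof -
  have "m = (m - n) + n" using assms(2) by simp
  then show ?thesis
    using assms(1) funpow_F_mt_zero by (metis funpow_add o_apply)
qed

lemma F_mt_halves_ratio:
  fixes p x y c :: int
  assumes "[x = 2 * c * y] (mod p)"
  shows "[fst (F_mt p (x, y)) = c * snd (F_mt p (x, y))] (mod p)"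
proof -
  let ?t = "x * y * (x - y)"
  have "fst (F_mt p (x, y)) = (x * ?t) mod p" and "snd (F_mt p (x, y)) = (2 * y * ?t) mod p"
    by (simp_all add: F_mt_def power2_eq_square algebra_simps)
  moreover have "[x * ?t = 2 * c * y * ?t] (mod p)"
    using assms by (rule cong_scalar_right)
  ultimately show ?thesis
    by (simp add: cong_def mod_mult_right_eq algebra_simps)
qed

lemma funpow_F_mt_pow2_ratio:
  fixes p x y :: int
  assumes "p > 0" "x \<in> {0..<p}" "y \<in> {0..<p}" "[x = 2 ^ k * y] (mod p)"
  shows "(F_mt p ^^ Suc k) (x, y) = (0, 0)"
  using assms(2-)
proof (induction k arbitrary: x y)
  case 0
  then have "x = y" by (simp add: cong_def)
  then show ?case by (simp add: F_mt_diagonal)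
next
  case (Suc k)
  obtain x' y' where F: "F_mt p (x, y) = (x', y')" by fastforce
  have "x' \<in> {0..<p}" "y' \<in> {0..<p}"
    using F \<open>p > 0\<close> by (auto simp: F_mt_def)
  moreover have "[x' = 2 ^ k * y'] (mod p)"
    using F_mt_halves_ratio[of x "2 ^ k" y p] Suc.prems(3) F by (simp add: ac_simps)
  ultimately have "(F_mt p ^^ Suc k) (x', y') = (0, 0)"
    by (rule Suc.IH)
  then show ?case
    using F by (simp only: funpow_Suc_right o_apply)
qed

lemma residue_primroot_discrete_log:
  assumes "m > 1" "residue_primroot m g" "coprime m a"
  obtains k where "k < totient m" "[g ^ k = a] (mod m)"
proof -
  have "a mod m \<noteq> 0"
    using assms(1,3) coprime_absorb_left[of m a] by (auto simp: mod_eq_0_iff_dvd)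
  then have "a mod m \<in> totatives m"
    using assms(1,3) by (auto simp: totatives_def coprime_commute)
  then obtain k where "k < totient m" "g ^ k mod m = a mod m"
    using residue_primroot_is_generator[OF assms(1,2)] by (force simp: bij_betw_def)
  then show ?thesis
    using that by (simp add: cong_def)
qed

lemma prime_residue_primroot_ratio:
  assumes "prime p" "residue_primroot p g" "\<not> p dvd x" "\<not> p dvd y"
  obtains k where "k < p - 1" "[x = g ^ k * y] (mod p)"
proof -
  have "p \<ge> 2" using assms(1) by (rule prime_ge_2_nat)
  have "coprime p (x * y ^ (p - 2))"
    using assms by (simp add: prime_imp_coprime prime_dvd_mult_iff prime_dvd_power_iff)
  then obtain k where k: "k < p - 1" "[g ^ k = x * y ^ (p - 2)] (mod p)"
    using residue_primroot_discrete_log[OF _ assms(2)] \<open>p \<ge> 2\<close> totient_prime[OF assms(1)]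
    by (metis Suc_1 Suc_le_lessD)
  have "y ^ (p - 2) * y = y ^ (p - 1)"
    using \<open>p \<ge> 2\<close> by (simp flip: power_Suc2 add: Suc_diff_Suc numeral_2_eq_2)
  then have "[g ^ k * y = x * y ^ (p - 1)] (mod p)"
    using cong_scalar_right[OF k(2), of y] by (simp add: mult.assoc)
  also have "[x * y ^ (p - 1) = x * 1] (mod p)"
    using fermat_theorem[OF assms(1,4)] by (rule cong_scalar_left)
  finally show ?thesis
    using that k(1) by (simp add: cong_sym)
qed

lemma funpow_F_mt_vanishes:
  assumes "prime p" "ord p 2 = p - 1" "x \<in> {0..<int p}" "y \<in> {0..<int p}"
  shows "(F_mt (int p) ^^ (p - 1)) (x, y) = (0, 0)"
proof -
  have "p \<ge> 2" using assms(1) by (rule prime_ge_2_nat)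
  show ?thesis
  proof (cases "x = 0 \<or> y = 0")
    case True
    have "(F_mt (int p) ^^ 1) (x, y) = (0, 0)"
      using True by (simp add: F_mt_axes)
    then show ?thesis
      using funpow_F_mt_zero_mono[of 1, where m = "p - 1"] \<open>p \<ge> 2\<close> by simp
  next
    case False
    have "residue_primroot p 2"
      using assms(1,2) \<open>p \<ge> 2\<close> ord_gt_0_iff[of p 2] by (simp add: residue_primroot_def totient_prime)
    obtain xn yn where xy: "x = int xn" "y = int yn"
      using assms(3,4) nonneg_int_cases by (metis atLeastLessThan_iff)
    then have "\<not> p dvd xn" "\<not> p dvd yn"
      using assms(3,4) False by (auto dest: dvd_imp_le)
    then obtain k where "k < p - 1" "[xn = 2 ^ k * yn] (mod p)"
      using prime_residue_primroot_ratio[OF assms(1) \<open>residue_primroot p 2\<close>] by blast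
    moreover from this(2) have "[x = 2 ^ k * y] (mod int p)"
      unfolding xy by (simp flip: cong_int_iff)
    then have "(F_mt (int p) ^^ Suc k) (x, y) = (0, 0)"
      using funpow_F_mt_pow2_ratio assms(3,4) \<open>p \<ge> 2\<close> by simp
    ultimately show ?thesis
      using funpow_F_mt_zero_mono by (metis Suc_leI)
  qed
qed

theorem mainTheorem2:
  fixes p :: nat
  assumes "prime p"
    and "ord p 2 = p - 1"
  shows "\<exists>N::nat. N \<ge> 1 \<and>
           (\<forall>x\<in>{0..<int p}. \<forall>y\<in>{0..<int p}. (F_mt (int p) ^^ N) (x, y) = (0, 0))"
proof (intro exI[of _ "p - 1"] conjI ballI)
  show "1 \<le> p - 1"
    using prime_ge_2_nat[OF assms(1)] by simp
  show "(F_mt (int p) ^^ (p - 1)) (x, y) = (0, 0)" if "x \<in> {0..<int p}" "y \<in> {0..<int p}" for x y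
    using funpow_F_mt_vanishes[OF assms that] .
qed

end
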